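(* Let $\omega\in S_n$ and $1\le i<j\le n$ with $c_i(\omega),c_j(\omega)>0$. If $m_{i,p}(\omega)>m_{j,q}(\omega)$ for some $p\in[c_i(\omega)]$ and $q\in[c_j(\omega)]$, then $c_j(\omega)\ge c_i(\omega)+q-p$.
   Context: Permutations $\omega\in S_n$ are written in one-line notation. Let ${\rm Inv}(\omega)=\{(i,j): 1\le i<j\le n,\ \omega(i)>\omega(j)\}$, $c_i(\omega)=\#\{j: i<j\le n,\ \omega(i)>\omega(j)\}$, and for $i<j$, $c_{i,j}(\omega)=\#\{k: i<k<j,\ \omega(i)>\omega(k)\}$; $[m]=\{1,\dots,m\}$. For $i$ with $c_i(\omega)>0$ and $x\in[c_i(\omega)]$, $m_{i,x}(\omega)\in\mathbb{N}^n$ has $j$-th coordinate $0$ if $j<i$; $x$ if $j=i$; $0$ if $j>i$ and $(i,j)\in{\rm Inv}(\omega)$; $\max\{0,x-c_{i,j}(\omega)\}$ if $j>i$ and $(i,j)\notin{\rm Inv}(\omega)$. Comparisons are strict comparisons in the product order on $\mathbb{N}^n$. *)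

theory Defs
  imports "HOL-Combinatorics.Permutations"
begin

text \<open>Permutations of [n] = {1..n} are functions w :: nat => nat with w permutes {1..n}.
 Vectors in N^n are functions nat => nat, with only coordinates 1..n relevant.\<close>

definition inv_set :: "nat \<Rightarrow> (nat \<Rightarrow> nat) \<Rightarrow> (nat \<times> nat) set" where
  "inv_set n w = {(i, j). 1 \<le> i \<and> i < j \<and> j \<le> n \<and> w i > w j}"

definition code :: "nat \<Rightarrow> (nat \<Rightarrow> nat) \<Rightarrow> nat \<Rightarrow> nat" where
  "code n w i = card {j. i < j \<and> j \<le> n \<and> w i > w j}"

definition code2 :: "(nat \<Rightarrow> nat) \<Rightarrow> nat \<Rightarrow> nat \<Rightarrow> nat" where
  "code2 w i j = card {k. i < k \<and> k < j \<and> w i > w k}"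

definition mvec :: "nat \<Rightarrow> (nat \<Rightarrow> nat) \<Rightarrow> nat \<Rightarrow> nat \<Rightarrow> (nat \<Rightarrow> nat)" where
  "mvec n w i x = (\<lambda>j. if j < i then 0
                        else if j = i then x
                        else if (i, j) \<in> inv_set n w then 0
                        else x - code2 w i j)"
  \<comment> \<open>natural-number subtraction truncates, so x - c = max 0 (x - c)\<close>

definition vec_less :: "nat \<Rightarrow> (nat \<Rightarrow> nat) \<Rightarrow> (nat \<Rightarrow> nat) \<Rightarrow> bool" where
  "vec_less n u v \<longleftrightarrow> (\<forall>k\<in>{1..n}. u k \<le> v k) \<and> (\<exists>k\<in>{1..n}. u k \<noteq> v k)"

end

theory Submission
  imports Defs
begin

(* Only the j-th coordinate of the domination
   m_{j,q} < m_{i,p} is needed.  There m_{j,q} has entry q >= 1, so the entry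
   of m_{i,p} at j is positive; hence (i,j) is not an inversion (else that entry
   would be 0), and the entry equals p - c_{i,j}.  This gives q + c_{i,j} <= p.
   Since (i,j) is not an inversion, w(i) <= w(j), so every k > i with
   w(k) < w(i) either lies strictly between i and j or lies after j with
   w(k) < w(j); thus c_i <= c_{i,j} + c_j. *)

text \<open>If position i is not above position j in value, the inversions starting at i
  split into those ending before j and inversions starting at j.\<close>
lemma code_le_code2_plus_code:
  assumes "i < j" and "w i \<le> w j"
  shows "code n w i \<le> code2 w i j + code n w j"
proof -
  let ?before = "{k. i < k \<and> k < j \<and> w i > w k}"
  let ?after = "{k. j < k \<and> k \<le> n \<and> w j > w k}"
  have "{k. i < k \<and> k \<le> n \<and> w i > w k} \<subseteq> ?before \<union> ?after"
    using assms by (auto simp: not_less_iff_gr_or_eq)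
  then have "code n w i \<le> card (?before \<union> ?after)"
    unfolding code_def by (rule card_mono[rotated]) auto
  also have "\<dots> \<le> code2 w i j + code n w j"
    unfolding code_def code2_def by (rule card_Un_le)
  finally show ?thesis .
qed

lemma mvec_at_self: "mvec n w j q j = q"
  unfolding mvec_def by simp

lemma mvec_at_later:
  assumes "i < j"
  shows "mvec n w i p j = (if (i, j) \<in> inv_set n w then 0 else p - code2 w i j)"
  using assms unfolding mvec_def by simp

lemma vec_less_coord:
  assumes "vec_less n u v" and "k \<in> {1..n}"
  shows "u k \<le> v k"
  using assms unfolding vec_less_def by blast

lemma mvec_coord_le_imp:
  assumes "i < j" and "0 < q" and "mvec n w j q j \<le> mvec n w i p j"
  shows "(i, j) \<notin> inv_set n w" and "q + code2 w i j \<le> p"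
proof -
  have entry: "q \<le> (if (i, j) \<in> inv_set n w then 0 else p - code2 w i j)"
    using assms(3) by (simp add: mvec_at_self mvec_at_later[OF assms(1)])
  then show notinv: "(i, j) \<notin> inv_set n w"
    using assms(2) by (auto split: if_splits)
  show "q + code2 w i j \<le> p"
    using entry notinv assms(2) by simp
qed

theorem mainTheorem5:
  fixes n :: nat and w :: "nat \<Rightarrow> nat" and i j p q :: nat
  assumes "w permutes {1..n}"
    and "1 \<le> i" "i < j" "j \<le> n"
    and "code n w i > 0" "code n w j > 0"
    and "p \<in> {1..code n w i}" "q \<in> {1..code n w j}"
    and "vec_less n (mvec n w j q) (mvec n w i p)"
  shows "int (code n w j) \<ge> int (code n w i) + int q - int p"
proof -
  have q_pos: "0 < q" using assms(8) by simp
  have "mvec n w j q j \<le> mvec n w i p j"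
    using vec_less_coord[OF assms(9)] assms(2-4) by simp
  note coord = mvec_coord_le_imp[OF assms(3) q_pos this]
  have "w i \<le> w j"
    using coord(1) assms(2-4) unfolding inv_set_def by auto
  then have "code n w i \<le> code2 w i j + code n w j"
    using code_le_code2_plus_code[OF assms(3)] by blast
  then show ?thesis using coord(2) by linarith
qed

end
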